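(* Let $E$ be a universally measurable separable metric space with Borel $\sigma$-algebra $\mathcal{B}$, $P$ a Markovian kernel on $(E,\mathcal{B})$, $R=\sum_{k=0}^\infty2^{-(k+1)}P^k$, and $\mathcal{B}_1^+$ the measurable functions with values in $[0,1]$. Assume there exist a finite positive measure $m$, a continuous $\phi:[0,\infty)\to[0,\infty)$ with $\phi(0)=0$ having an increasing inverse $\phi^{-1}$, and $\delta\in[0,1)$ such that $Pf(x)\le\phi(m(f))+\delta$ for all $f\in\mathcal{B}_1^+$ and all $x\in E$. Then $m\circ R$ is mean almost invariant for $P$, and the number of pairwise mutually singular invariant probability measures of $P$ is at most $m(E)/\phi^{-1}(1-\delta)$. Consequently, if $\phi(m(E)/2)<1-\delta$, then $P$ has a unique invariant probability measure (hence ergodic).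
   Context: $m\circ R$ is the measure $A\mapsto m(R1_A)$. A finite positive measure $\mu$ is mean almost invariant for $P$ if there exist $\delta'\in[0,1)$, $\psi:\mathcal{B}\to\mathbb{R}_+$ with $\lim_{\mu(A)\to0}\psi(A)=0$ and $n_1$ such that $\mu(S_n1_A)\le\psi(A)+\delta'\mu(E)$ for all $A$ and $n\ge n_1$, where $S_n=\frac1n\sum_{k=0}^{n-1}P^k$. *)

theory Defs
  imports "HOL-Probability.Probability"
begin

definition universally_measurable :: "'a::topological_space set \<Rightarrow> bool" where
  "universally_measurable S \<longleftrightarrow>
     (\<forall>\<mu>. finite_measure \<mu> \<and> sets \<mu> = sets borel \<longrightarrow> S \<in> sets (completion \<mu>))"

definition markov_kernel :: "'a measure \<Rightarrow> ('a \<Rightarrow> 'a measure) \<Rightarrow> bool" where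
  "markov_kernel M K \<longleftrightarrow> K \<in> M \<rightarrow>\<^sub>M prob_algebra M"

definition kop :: "('a \<Rightarrow> 'a measure) \<Rightarrow> ('a \<Rightarrow> real) \<Rightarrow> 'a \<Rightarrow> real" where
  "kop K f x = (\<integral>y. f y \<partial>(K x))"

definition kpow :: "('a \<Rightarrow> 'a measure) \<Rightarrow> nat \<Rightarrow> ('a \<Rightarrow> real) \<Rightarrow> 'a \<Rightarrow> real" where
  "kpow K n f = (kop K ^^ n) f"

definition resolvent :: "('a \<Rightarrow> 'a measure) \<Rightarrow> ('a \<Rightarrow> real) \<Rightarrow> 'a \<Rightarrow> real" where
  "resolvent K f x = (\<Sum>k. (1/2) ^ (k+1) * kpow K k f x)"

definition cesaro :: "('a \<Rightarrow> 'a measure) \<Rightarrow> nat \<Rightarrow> ('a \<Rightarrow> real) \<Rightarrow> 'a \<Rightarrow> real" where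
  "cesaro K n f x = (1 / real n) * (\<Sum>k<n. kpow K k f x)"

definition comp_resolvent :: "'a measure \<Rightarrow> 'a measure \<Rightarrow> ('a \<Rightarrow> 'a measure) \<Rightarrow> 'a measure" where
  "comp_resolvent M m K =
     measure_of (space M) (sets M) (\<lambda>A. ennreal (\<integral>x. resolvent K (indicator A) x \<partial>m))"

definition mean_almost_invariant :: "'a measure \<Rightarrow> ('a \<Rightarrow> 'a measure) \<Rightarrow> 'a measure \<Rightarrow> bool" where
  "mean_almost_invariant M K \<mu> \<longleftrightarrow>
     finite_measure \<mu> \<and> sets \<mu> = sets M \<and>
     (\<exists>\<delta>' \<psi> n1. 0 \<le> \<delta>' \<and> \<delta>' < 1 \<and>
        (\<forall>A\<in>sets M. 0 \<le> \<psi> A) \<and>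
        (\<forall>\<epsilon>>0. \<exists>\<eta>>0. \<forall>A\<in>sets M. measure \<mu> A < \<eta> \<longrightarrow> \<psi> A < \<epsilon>) \<and>
        (\<forall>A\<in>sets M. \<forall>n\<ge>n1.
           (\<integral>x. cesaro K n (indicator A) x \<partial>\<mu>) \<le> \<psi> A + \<delta>' * measure \<mu> (space M)))"

definition invariant_prob :: "'a measure \<Rightarrow> ('a \<Rightarrow> 'a measure) \<Rightarrow> 'a measure \<Rightarrow> bool" where
  "invariant_prob M K \<mu> \<longleftrightarrow> prob_space \<mu> \<and> sets \<mu> = sets M \<and>
     (\<forall>A\<in>sets M. (\<integral>x. kop K (indicator A) x \<partial>\<mu>) = measure \<mu> A)"

definition mutually_singular :: "'a measure \<Rightarrow> 'a measure \<Rightarrow> 'a measure \<Rightarrow> bool" where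
  "mutually_singular M \<mu> \<nu> \<longleftrightarrow>
     (\<exists>A\<in>sets M. emeasure \<mu> A = 0 \<and> emeasure \<nu> (space M - A) = 0)"

end

theory Submission
  imports Defs
begin

text \<open>
  As \<open>P\<close> preserves constant upper bounds, the hypothesis gives \<open>P\<^sup>k 1\<^sub>A \<le> \<phi>(m A) + \<delta>\<close>
  for all \<open>k \<ge> 1\<close>, so the Cesaro averages of \<open>1\<^sub>A\<close> are at most \<open>1\<^sub>A + \<phi>(m A) + \<delta>\<close>.
  Since \<open>R 1\<^sub>A \<ge> 1\<^sub>A / 2\<close>, the measure \<open>m \<circ> R\<close> dominates \<open>m / 2\<close>, hence \<open>\<phi>(m A)\<close> is small
  when \<open>(m \<circ> R) A\<close> is: this is mean almost invariance.

  An invariant probability \<open>\<mu>\<close> with \<open>\<mu> D = 1\<close> satisfies \<open>1 = \<integral> P 1\<^sub>D d\<mu> \<le> \<phi>(m D) + \<delta>\<close>,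
  so \<open>m D \<ge> \<phi>\<^sup>-\<^sup>1(1 - \<delta>)\<close>. Pairwise mutually singular invariant probabilities are carried by
  pairwise disjoint sets, which bounds their number by \<open>m E / \<phi>\<^sup>-\<^sup>1(1 - \<delta>)\<close>.

  If \<open>\<phi>(m E / 2) < 1 - \<delta>\<close>, then for \<open>f\<close> with values in \<open>[0, 1]\<close> one of \<open>f\<close>, \<open>1 - f\<close> has
  \<open>m\<close>-integral at most \<open>m E / 2\<close>, so the oscillation of \<open>P f\<close> is at most
  \<open>c = \<phi>(m E / 2) + \<delta> < 1\<close>. Hence \<open>P\<^sup>n f\<close> converges uniformly to a constant \<open>L f\<close>, and
  \<open>A \<mapsto> L 1\<^sub>A\<close> is the unique invariant probability measure.
\<close>

definition measurable_between :: "'a measure \<Rightarrow> ('a \<Rightarrow> real) \<Rightarrow> real \<Rightarrow> real \<Rightarrow> bool" where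
  "measurable_between M f a b \<longleftrightarrow> f \<in> borel_measurable M \<and> (\<forall>x\<in>space M. a \<le> f x \<and> f x \<le> b)"

lemma measurable_between_indicator: "A \<in> sets M \<Longrightarrow> measurable_between M (indicator A) 0 1"
  by (auto simp: measurable_between_def)

lemma measurable_between_cong_sets:
  assumes "sets N = sets M"
  shows "measurable_between N f a b \<longleftrightarrow> measurable_between M f a b"
  by (simp add: measurable_between_def measurable_cong_sets[OF assms refl] sets_eq_imp_space_eq[OF assms])

lemma abs_le_max_abs_if_between: "a \<le> (y::real) \<Longrightarrow> y \<le> b \<Longrightarrow> \<bar>y\<bar> \<le> max \<bar>a\<bar> \<bar>b\<bar>"
  by arith

lemma (in finite_measure) integrable_if_measurable_between:
  "measurable_between M f a b \<Longrightarrow> integrable M f"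
  unfolding measurable_between_def
  by (intro integrable_const_bound[where B="max \<bar>a\<bar> \<bar>b\<bar>"]) (auto intro!: AE_I2 abs_le_max_abs_if_between)

lemma (in prob_space) integral_between:
  assumes f: "measurable_between M f a b"
  shows "a \<le> integral\<^sup>L M f \<and> integral\<^sup>L M f \<le> b"
proof -
  have "integrable M f" using f by (rule integrable_if_measurable_between)
  then have "integral\<^sup>L M (\<lambda>x. a) \<le> integral\<^sup>L M f \<and> integral\<^sup>L M f \<le> integral\<^sup>L M (\<lambda>x. b)"
    using f by (intro conjI integral_mono) (auto simp: measurable_between_def)
  then show ?thesis by (simp add: prob_space)
qed

lemma eq_if_abs_diff_le_geometric:
  fixes x y c B :: real
  assumes c: "0 \<le> c" "c < 1" and le: "\<And>n. \<bar>x - y\<bar> \<le> B * c ^ n"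
  shows "x = y"
proof -
  have "(\<lambda>n. B * c ^ n) \<longlonglongrightarrow> B * 0"
    by (intro tendsto_mult tendsto_const LIMSEQ_power_zero) (use c in auto)
  then have "\<bar>x - y\<bar> \<le> 0" using le by (intro LIMSEQ_le_const[of "\<lambda>n. B * c ^ n"]) auto
  then show ?thesis by simp
qed

lemma ex_power_less:
  fixes c e :: real
  assumes "0 \<le> c" "c < 1" "0 < e"
  shows "\<exists>n. c ^ n < e"
proof -
  have "(\<lambda>n. c ^ n) \<longlonglongrightarrow> 0" by (intro LIMSEQ_power_zero) (use assms in auto)
  then have "eventually (\<lambda>n. c ^ n < e) sequentially" using \<open>0 < e\<close> by (rule order_tendstoD)
  then show ?thesis by (auto simp: eventually_sequentially)
qed

lemma ex_interval_if_oscillation_le: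
  fixes h :: "'a \<Rightarrow> real"
  assumes ne: "S \<noteq> {}" and lower: "\<And>x. x \<in> S \<Longrightarrow> a \<le> h x"
    and osc: "\<And>x y. x \<in> S \<Longrightarrow> y \<in> S \<Longrightarrow> h x - h y \<le> d"
  shows "\<exists>a'. \<forall>x\<in>S. a' \<le> h x \<and> h x \<le> a' + d"
proof (intro exI ballI conjI)
  have bdd: "bdd_below (h ` S)" using lower by (meson bdd_belowI2)
  fix x assume x: "x \<in> S"
  show "(INF y\<in>S. h y) \<le> h x" using bdd x by (rule cINF_lower)
  have "h x - d \<le> (INF y\<in>S. h y)"
    using ne by (rule cINF_greatest) (use osc x in force)
  then show "h x \<le> (INF y\<in>S. h y) + d" by simp
qed

lemma finite_card_le_if_finite_subsets:
  assumes t: "t > 0" and le: "\<And>G. G \<subseteq> F \<Longrightarrow> finite G \<Longrightarrow> real (card G) * t \<le> B"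
  shows "finite F \<and> real (card F) \<le> B / t"
proof -
  have "card G \<le> nat \<lfloor>B / t\<rfloor>" if "G \<subseteq> F" "finite G" for G
    using le[OF that] t by (simp add: le_nat_floor pos_le_divide_eq)
  then have "finite F \<and> card F \<le> nat \<lfloor>B / t\<rfloor>" by (rule finite_if_finite_subsets_card_bdd)
  moreover have "real (card F) * t \<le> B" if "finite F" using le[OF order_refl that] .
  ultimately show ?thesis using t by (simp add: pos_le_divide_eq)
qed

lemma strict_mono_on_if_inverse_mono:
  fixes \<phi> :: "real \<Rightarrow> real"
  assumes inj: "inj_on \<phi> {0..}" and inv_mono: "mono_on (\<phi> ` {0..}) (the_inv_into {0..} \<phi>)"
  shows "strict_mono_on {0..} \<phi>"
proof (rule strict_mono_onI)
  fix a b :: real assume ab: "a \<in> {0..}" "b \<in> {0..}" "a < b"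
  show "\<phi> a < \<phi> b"
  proof (rule ccontr)
    assume "\<not> \<phi> a < \<phi> b"
    then have "the_inv_into {0..} \<phi> (\<phi> b) \<le> the_inv_into {0..} \<phi> (\<phi> a)"
      using ab by (intro mono_onD[OF inv_mono]) auto
    then show False using the_inv_into_f_f[OF inj] ab by simp
  qed
qed

lemma the_inv_into_least:
  fixes \<phi> :: "real \<Rightarrow> real"
  assumes mono: "strict_mono_on {0..} \<phi>" and cont: "continuous_on {0..} \<phi>" and \<phi>_0: "\<phi> 0 = 0"
    and y: "0 < y" "y \<le> \<phi> E" "0 \<le> E"
  shows "0 < the_inv_into {0..} \<phi> y \<and> (\<forall>s\<ge>0. y \<le> \<phi> s \<longrightarrow> the_inv_into {0..} \<phi> y \<le> s)"
proof -
  have "continuous_on {0..E} \<phi>" using cont by (rule continuous_on_subset) auto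
  then obtain s0 where s0: "0 \<le> s0" "s0 \<le> E" "\<phi> s0 = y"
    using IVT'[of \<phi> 0 y E] y \<phi>_0 by auto
  have inv: "the_inv_into {0..} \<phi> y = s0"
    using the_inv_into_f_f[OF strict_mono_on_imp_inj_on[OF mono], of s0] s0 by simp
  have "s0 \<noteq> 0" using s0 y \<phi>_0 by auto
  moreover have "s0 \<le> s" if "0 \<le> s" "y \<le> \<phi> s" for s
  proof (rule ccontr)
    assume "\<not> s0 \<le> s"
    then have "\<phi> s < \<phi> s0" using strict_mono_onD[OF mono, of s s0] that s0 by simp
    then show False using that s0 by simp
  qed
  ultimately show ?thesis using inv s0 by auto
qed

lemma levels_below_eq:
  fixes t :: real and k :: nat
  assumes k: "k \<ge> 1" and t: "0 \<le> t" "t \<le> 1"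
  shows "{j\<in>{1..k}. real j / k \<le> t} = {1..nat \<lfloor>real k * t\<rfloor>}"
proof -
  have kp: "real k > 0" using k by simp
  have kt: "real k * t \<le> real k" using t kp by (simp add: mult_left_le)
  have m: "real (nat \<lfloor>real k * t\<rfloor>) = real_of_int \<lfloor>real k * t\<rfloor>" using t kp by simp
  have fl: "real_of_int \<lfloor>real k * t\<rfloor> \<le> real k * t" by linarith
  show ?thesis
  proof (intro set_eqI iffI)
    fix j assume "j \<in> {j\<in>{1..k}. real j / real k \<le> t}"
    then have "real j \<le> real k * t" "1 \<le> j" using kp by (auto simp: divide_le_eq mult.commute)
    then have "int j \<le> \<lfloor>real k * t\<rfloor>" by (simp add: le_floor_iff)
    then show "j \<in> {1..nat \<lfloor>real k * t\<rfloor>}" using \<open>1 \<le> j\<close> by auto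
  next
    fix j assume j: "j \<in> {1..nat \<lfloor>real k * t\<rfloor>}"
    then have "real j \<le> real (nat \<lfloor>real k * t\<rfloor>)" by simp
    then have "real j \<le> real k * t" using m fl by linarith
    moreover then have "j \<le> k" using kt by linarith
    ultimately show "j \<in> {j\<in>{1..k}. real j / real k \<le> t}"
      using j kp by (auto simp: divide_le_eq mult.commute)
  qed
qed

text \<open>The sum below equals \<open>\<lfloor>k t\<rfloor> / k\<close>.\<close>
lemma staircase_bounds:
  fixes t :: real and k :: nat
  assumes k: "k \<ge> 1" and t: "0 \<le> t" "t \<le> 1"
  shows "t - 1 / k \<le> (\<Sum>j\<in>{1..k}. (1 / k) * indicator {y. real j / k \<le> y} t)
     \<and> (\<Sum>j\<in>{1..k}. (1 / k) * indicator {y. real j / k \<le> y} t) \<le> t"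
proof -
  have kp: "real k > 0" using k by simp
  define m where "m = nat \<lfloor>real k * t\<rfloor>"
  have fl: "real_of_int \<lfloor>real k * t\<rfloor> \<le> real k * t" "real k * t < real_of_int \<lfloor>real k * t\<rfloor> + 1"
    by linarith+
  have m: "real m = real_of_int \<lfloor>real k * t\<rfloor>" using t kp unfolding m_def by simp
  have "(\<Sum>j\<in>{1..k}. (1 / k) * indicator {y. real j / k \<le> y} t)
      = (1/k) * (\<Sum>j\<in>{1..k}. if real j / k \<le> t then 1 else 0)"
    by (simp add: sum_distrib_left indicator_def of_bool_def)
  also have "(\<Sum>j\<in>{1..k}. if real j / k \<le> t then 1 else 0::real)
      = real (card {j\<in>{1..k}. real j / real k \<le> t})"
    by (subst sum.inter_filter[symmetric]) auto
  also have "\<dots> = real m" using levels_below_eq[OF k t] by (simp add: m_def)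
  finally have sum_eq: "(\<Sum>j\<in>{1..k}. (1 / k) * indicator {y. real j / k \<le> y} t) = real m / k"
    by simp
  have "real k * t - 1 \<le> real m" "real m \<le> real k * t" using fl m by linarith+
  then have "(real k * t - 1) / k \<le> real m / k" "real m / k \<le> (real k * t) / k"
    using kp by (simp_all only: divide_right_mono less_imp_le)
  moreover have "(real k * t - 1) / k = t - 1 / k" "(real k * t) / k = t"
    using kp by (simp_all add: field_simps)
  ultimately have "t - 1 / k \<le> real m / k" "real m / k \<le> t" by simp_all
  then show ?thesis unfolding sum_eq by simp
qed

lemma step_function_approx:
  fixes k :: nat
  assumes g: "measurable_between M g 0 1" and k: "k \<ge> 1"
  obtains B where "\<And>j. B j \<in> sets M"
    and "measurable_between M (\<lambda>y. \<Sum>j\<in>{1..k}. (1/k) * indicator (B j) y) 0 1"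
    and "measurable_between M (\<lambda>y. g y - (\<Sum>j\<in>{1..k}. (1/k) * indicator (B j) y)) 0 (1/k)"
proof -
  define B where "B j = {y\<in>space M. real j / k \<le> g y}" for j
  have [measurable]: "g \<in> borel_measurable M" using g by (simp add: measurable_between_def)
  have B: "B j \<in> sets M" for j
    unfolding B_def by measurable
  define s where "s = (\<lambda>y. \<Sum>j\<in>{1..k}. (1/k) * indicator (B j) y :: real)"
  have s_approx: "g y - 1/k \<le> s y \<and> s y \<le> g y" if y: "y \<in> space M" for y
    using staircase_bounds[OF k, of "g y"] g y
    by (simp add: s_def B_def measurable_between_def indicator_def)
  have s_measurable: "s \<in> borel_measurable M"
    unfolding s_def using B by (intro borel_measurable_sum borel_measurable_times) auto
  have "measurable_between M s 0 1"
    unfolding measurable_between_def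
  proof (intro conjI ballI s_measurable)
    fix y assume y: "y \<in> space M"
    show "0 \<le> s y" unfolding s_def by (intro sum_nonneg) auto
    show "s y \<le> 1" using s_approx[OF y] g y by (auto simp: measurable_between_def)
  qed
  moreover have "measurable_between M (\<lambda>y. g y - s y) 0 (1/k)"
    unfolding measurable_between_def
  proof (intro conjI ballI)
    show "(\<lambda>y. g y - s y) \<in> borel_measurable M"
      by (rule borel_measurable_diff) (use g s_measurable in \<open>simp_all add: measurable_between_def\<close>)
    show "0 \<le> g y - s y" "g y - s y \<le> 1/k" if "y \<in> space M" for y
      using s_approx[OF that] by linarith+
  qed
  ultimately show ?thesis using that B unfolding s_def by blast
qed

lemma emeasure_measure_of_additive_continuous:
  fixes \<rho> :: "'a set \<Rightarrow> real"
  assumes nonneg: "\<And>A. A \<in> sets M \<Longrightarrow> 0 \<le> \<rho> A"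
    and add: "\<And>A B. A \<in> sets M \<Longrightarrow> B \<in> sets M \<Longrightarrow> A \<inter> B = {} \<Longrightarrow> \<rho> (A \<union> B) = \<rho> A + \<rho> B"
    and cont: "\<And>T. range T \<subseteq> sets M \<Longrightarrow> decseq T \<Longrightarrow> (\<Inter>i. T i) = {} \<Longrightarrow> (\<lambda>i. \<rho> (T i)) \<longlonglongrightarrow> 0"
    and A: "A \<in> sets M"
  shows "emeasure (measure_of (space M) (sets M) (\<lambda>A. ennreal (\<rho> A))) A = ennreal (\<rho> A)"
proof (rule emeasure_measure_of_sigma[OF sets.sigma_algebra_axioms _ _ A])
  have "\<rho> {} = 0" using add[of "{}" "{}"] by simp
  then show pos: "positive (sets M) (\<lambda>A. ennreal (\<rho> A))" by (simp add: positive_def)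
  have "additive (sets M) (\<lambda>A. ennreal (\<rho> A))"
    by (auto simp: additive_def add nonneg ennreal_plus)
  then show "countably_additive (sets M) (\<lambda>A. ennreal (\<rho> A))"
  proof (rule sets.empty_continuous_imp_countably_additive[OF pos])
    fix T :: "nat \<Rightarrow> 'a set"
    assume "range T \<subseteq> sets M" "decseq T" "(\<Inter>i. T i) = {}"
    then have "(\<lambda>i. ennreal (\<rho> (T i))) \<longlonglongrightarrow> ennreal 0" by (intro tendsto_ennrealI cont)
    then show "(\<lambda>i. ennreal (\<rho> (T i))) \<longlonglongrightarrow> 0" by simp
  qed simp
qed

section \<open>Markov kernels as operators\<close>

lemma kpow_0[simp]: "kpow K 0 f = f"
  by (simp add: kpow_def)

locale markov_operator =
  fixes M :: "'a measure" and K :: "'a \<Rightarrow> 'a measure"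
  assumes markov: "markov_kernel M K"
begin

lemma kernel_in_prob_algebra: "K \<in> M \<rightarrow>\<^sub>M prob_algebra M"
  using markov by (simp add: markov_kernel_def)

lemma kernel_in_subprob_algebra: "K \<in> M \<rightarrow>\<^sub>M subprob_algebra M"
  using kernel_in_prob_algebra by (rule measurable_prob_algebraD)

lemma
  assumes "x \<in> space M"
  shows prob_space_kernel: "prob_space (K x)" and sets_kernel: "sets (K x) = sets M"
    and space_kernel: "space (K x) = space M"
  using measurable_space[OF kernel_in_prob_algebra assms]
  by (auto simp: space_prob_algebra intro!: sets_eq_imp_space_eq)

lemma emeasure_kernel_space: "x \<in> space M \<Longrightarrow> emeasure (K x) (space M) = 1"
  using prob_space.emeasure_space_1[OF prob_space_kernel] space_kernel by metis

lemma measurable_between_kernel: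
  "x \<in> space M \<Longrightarrow> measurable_between (K x) f a b \<longleftrightarrow> measurable_between M f a b"
  by (rule measurable_between_cong_sets[OF sets_kernel])

lemma kop_measurable: "f \<in> borel_measurable M \<Longrightarrow> kop K f \<in> borel_measurable M"
  unfolding kop_def[abs_def]
  by (rule measurable_compose[OF kernel_in_subprob_algebra integral_measurable_subprob_algebra])

lemma integrable_kernel:
  assumes "measurable_between M f a b" and x: "x \<in> space M"
  shows "integrable (K x) f"
proof -
  interpret prob_space "K x" using prob_space_kernel[OF x] .
  show ?thesis using assms measurable_between_kernel[OF x] integrable_if_measurable_between by blast
qed

lemma kop_between:
  assumes f: "measurable_between M f a b"
  shows "measurable_between M (kop K f) a b"
  unfolding measurable_between_def
proof (intro conjI ballI)
  show "kop K f \<in> borel_measurable M" using f by (simp add: measurable_between_def kop_measurable)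
  fix x assume x: "x \<in> space M"
  have "measurable_between (K x) f a b" using f measurable_between_kernel[OF x] by simp
  then show "a \<le> kop K f x" "kop K f x \<le> b"
    using prob_space.integral_between[OF prob_space_kernel[OF x]] unfolding kop_def by blast+
qed

lemma kop_cong: "(\<And>y. y \<in> space M \<Longrightarrow> f y = g y) \<Longrightarrow> x \<in> space M \<Longrightarrow> kop K f x = kop K g x"
  unfolding kop_def by (rule Bochner_Integration.integral_cong) (auto simp: space_kernel)

lemma kop_const: "x \<in> space M \<Longrightarrow> kop K (\<lambda>y. b) x = b"
  using prob_space_kernel by (simp add: kop_def prob_space.prob_space)

lemma kop_sum:
  assumes "finite J" and "\<And>j. j \<in> J \<Longrightarrow> measurable_between M (f j) (a j) (b j)" and "x \<in> space M"
  shows "kop K (\<lambda>y. \<Sum>j\<in>J. c j * f j y) x = (\<Sum>j\<in>J. c j * kop K (f j) x)"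
proof -
  have "integrable (K x) (f j)" if "j \<in> J" for j using integrable_kernel assms that by blast
  then show ?thesis unfolding kop_def by (simp add: Bochner_Integration.integral_sum)
qed

lemma kop_affine:
  assumes "measurable_between M f a b" and x: "x \<in> space M"
  shows "kop K (\<lambda>y. c * f y + d) x = c * kop K f x + d"
proof -
  interpret prob_space "K x" using prob_space_kernel[OF x] .
  show ?thesis unfolding kop_def
    by (subst Bochner_Integration.integral_add) (use integrable_kernel[OF assms] in \<open>auto simp: prob_space\<close>)
qed

lemma kpow_Suc: "kpow K (Suc n) f = kop K (kpow K n f)"
  by (simp add: kpow_def)

lemma kpow_Suc_right: "kpow K (Suc n) f = kpow K n (kop K f)"
  by (simp add: kpow_def funpow_Suc_right del: funpow.simps)

lemma kpow_add: "kpow K (m + n) f = kpow K m (kpow K n f)"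
  by (simp add: kpow_def funpow_add)

lemma kpow_between: "measurable_between M f a b \<Longrightarrow> measurable_between M (kpow K n f) a b"
  by (induction n) (auto simp: kpow_Suc kop_between)

lemma kpow_const: "x \<in> space M \<Longrightarrow> kpow K n (\<lambda>y. b) x = b"
proof (induction n arbitrary: x)
  case (Suc n)
  then have "kpow K (Suc n) (\<lambda>y. b) x = kop K (\<lambda>y. b) x"
    unfolding kpow_Suc by (intro kop_cong) auto
  then show ?case using Suc by (simp add: kop_const)
qed simp

lemma kpow_sum:
  assumes J: "finite J" and f: "\<And>j. j \<in> J \<Longrightarrow> measurable_between M (f j) (a j) (b j)"
    and "x \<in> space M"
  shows "kpow K n (\<lambda>y. \<Sum>j\<in>J. c j * f j y) x = (\<Sum>j\<in>J. c j * kpow K n (f j) x)"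
  using \<open>x \<in> space M\<close>
proof (induction n arbitrary: x)
  case (Suc n)
  have "kpow K (Suc n) (\<lambda>y. \<Sum>j\<in>J. c j * f j y) x = kop K (\<lambda>y. \<Sum>j\<in>J. c j * kpow K n (f j) y) x"
    unfolding kpow_Suc by (rule kop_cong) (use Suc in auto)
  also have "\<dots> = (\<Sum>j\<in>J. c j * kpow K (Suc n) (f j) x)"
    unfolding kpow_Suc by (rule kop_sum[OF J _ Suc(2)]) (use f kpow_between in blast)
  finally show ?case .
qed simp

lemma kpow_add_fun:
  assumes "measurable_between M f a b" "measurable_between M g a' b'" "x \<in> space M"
  shows "kpow K n (\<lambda>y. f y + g y) x = kpow K n f x + kpow K n g x"
  using kpow_sum[of "{True, False}" "\<lambda>j. if j then f else g" "\<lambda>j. if j then a else a'"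
      "\<lambda>j. if j then b else b'" x n "\<lambda>_. 1"] assms
  by simp

lemma kpow_diff_fun:
  assumes "measurable_between M f a b" "measurable_between M g a' b'" "x \<in> space M"
  shows "kpow K n (\<lambda>y. f y - g y) x = kpow K n f x - kpow K n g x"
  using kpow_sum[of "{True, False}" "\<lambda>j. if j then f else g" "\<lambda>j. if j then a else a'"
      "\<lambda>j. if j then b else b'" x n "\<lambda>j. if j then 1 else -1"] assms
  by simp

lemma kpow_tendsto:
  assumes g: "\<And>i. measurable_between M (g i) (-B) B" "measurable_between M h (-B) B"
    and lim: "\<And>x. x \<in> space M \<Longrightarrow> (\<lambda>i. g i x) \<longlonglongrightarrow> h x"
    and "x \<in> space M"
  shows "(\<lambda>i. kpow K n (g i) x) \<longlonglongrightarrow> kpow K n h x"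
  using \<open>x \<in> space M\<close>
proof (induction n arbitrary: x)
  case 0
  then show ?case using lim by (simp add: kpow_def)
next
  case (Suc n)
  have gn: "measurable_between M (kpow K n (g i)) (-B) B" for i using g kpow_between by blast
  have hn: "measurable_between M (kpow K n h) (-B) B" using g kpow_between by blast
  show ?case unfolding kpow_Suc kop_def
  proof (rule integral_dominated_convergence[where w="\<lambda>_. B"])
    show "kpow K n h \<in> borel_measurable (K x)" "kpow K n (g i) \<in> borel_measurable (K x)" for i
      using hn gn Suc(2) by (auto simp: measurable_between_def measurable_cong_sets[OF sets_kernel])
    show "integrable (K x) (\<lambda>_. B)"
      using prob_space_kernel[OF Suc(2)] by (simp add: prob_space.finite_measure finite_measure.integrable_const)
    show "AE y in K x. (\<lambda>i. kpow K n (g i) y) \<longlonglongrightarrow> kpow K n h y"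
      by (rule AE_I2) (use Suc space_kernel[OF Suc(2)] in auto)
    show "AE y in K x. norm (kpow K n (g i) y) \<le> B" for i
      by (rule AE_I2) (use gn[of i] space_kernel[OF Suc(2)] in \<open>auto simp: measurable_between_def abs_le_iff\<close>)
  qed
qed

lemma kpow_indicator_decseq_tendsto_zero:
  assumes T: "range T \<subseteq> sets M" and dec: "decseq T" and empty: "(\<Inter>i. T i) = {}"
    and x: "x \<in> space M"
  shows "(\<lambda>i. kpow K n (indicator (T i)) x) \<longlonglongrightarrow> 0"
proof -
  have "(\<lambda>i. kpow K n (indicator (T i)) x) \<longlonglongrightarrow> kpow K n (\<lambda>_. 0) x"
  proof (rule kpow_tendsto[where B=1])
    show "measurable_between M (indicator (T i)) (- 1) 1" for i
      using T by (auto simp: measurable_between_def split: split_indicator)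
    show "measurable_between M (\<lambda>_. 0) (- 1) 1" by (auto simp: measurable_between_def)
    fix y
    obtain i0 where "y \<notin> T i0" using empty by auto
    then have "\<forall>\<^sub>F i in sequentially. indicator (T i) y = (0::real)"
      using dec by (auto simp: eventually_sequentially decseq_def indicator_def)
    then show "(\<lambda>i. indicator (T i) y :: real) \<longlonglongrightarrow> 0" by (rule tendsto_eventually)
  qed (rule x)
  then show ?thesis using kpow_const[OF x] by simp
qed

lemma kernel_in_subprob_algebra_cong: "sets \<mu> = sets M \<Longrightarrow> K \<in> \<mu> \<rightarrow>\<^sub>M subprob_algebra M"
  using kernel_in_subprob_algebra measurable_cong_sets[of \<mu> M] by blast

lemma bind_invariant_prob:
  assumes \<mu>: "invariant_prob M K \<mu>"
  shows "\<mu> \<bind> K = \<mu>"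
proof -
  have "prob_space \<mu>" and sets_\<mu>: "sets \<mu> = sets M"
    and inv: "\<And>A. A \<in> sets M \<Longrightarrow> (\<integral>x. kop K (indicator A) x \<partial>\<mu>) = measure \<mu> A"
    using \<mu> by (auto simp: invariant_prob_def)
  interpret prob_space \<mu> by fact
  have space_\<mu>: "space \<mu> = space M" using sets_\<mu> by (rule sets_eq_imp_space_eq)
  show ?thesis
  proof (rule measure_eqI)
    show sets_bind: "sets (\<mu> \<bind> K) = sets \<mu>"
      by (subst sets_bind[where N=M]) (use sets_\<mu> not_empty space_\<mu> sets_kernel in auto)
    fix A assume "A \<in> sets (\<mu> \<bind> K)"
    then have A: "A \<in> sets M" using sets_\<mu> sets_bind by simp
    have PA: "measurable_between \<mu> (kop K (indicator A)) 0 1"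
      using kop_between[OF measurable_between_indicator[OF A]] measurable_between_cong_sets[OF sets_\<mu>]
      by simp
    have "emeasure (\<mu> \<bind> K) A = (\<integral>\<^sup>+x. emeasure (K x) A \<partial>\<mu>)"
      by (rule emeasure_bind[OF not_empty kernel_in_subprob_algebra_cong[OF sets_\<mu>] A])
    also have "\<dots> = (\<integral>\<^sup>+x. ennreal (kop K (indicator A) x) \<partial>\<mu>)"
    proof (rule nn_integral_cong)
      fix x assume "x \<in> space \<mu>"
      then have x: "x \<in> space M" using space_\<mu> by simp
      interpret Kx: prob_space "K x" using prob_space_kernel[OF x] .
      have "A \<inter> space (K x) = A" using A sets.sets_into_space space_kernel[OF x] by blast
      then show "emeasure (K x) A = ennreal (kop K (indicator A) x)"
        by (simp add: kop_def Kx.emeasure_eq_measure)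
    qed
    also have "\<dots> = ennreal (\<integral>x. kop K (indicator A) x \<partial>\<mu>)"
      using PA integrable_if_measurable_between[OF PA]
      by (intro nn_integral_eq_integral) (auto simp: measurable_between_def intro!: AE_I2)
    also have "\<dots> = emeasure \<mu> A" using inv[OF A] by (simp add: emeasure_eq_measure)
    finally show "emeasure (\<mu> \<bind> K) A = emeasure \<mu> A" .
  qed
qed

lemma integral_kop_invariant:
  assumes \<mu>: "invariant_prob M K \<mu>" and f: "measurable_between M f a b"
  shows "(\<integral>x. kop K f x \<partial>\<mu>) = (\<integral>x. f x \<partial>\<mu>)"
proof -
  have "prob_space \<mu>" and sets_\<mu>: "sets \<mu> = sets M" using \<mu> by (auto simp: invariant_prob_def)
  interpret prob_space \<mu> by fact
  have space_\<mu>: "space \<mu> = space M" using sets_\<mu> by (rule sets_eq_imp_space_eq)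
  have "(\<integral>x. f x \<partial>\<mu>) = (\<integral>x. f x \<partial>(\<mu> \<bind> K))" using bind_invariant_prob[OF \<mu>] by simp
  also have "\<dots> = (\<integral>x. (\<integral>y. f y \<partial>K x) \<partial>\<mu>)"
    by (rule integral_bind[OF _ _ kernel_in_subprob_algebra_cong[OF sets_\<mu>],
          where B="max \<bar>a\<bar> \<bar>b\<bar>" and B'=1])
       (use f prob_space_kernel in \<open>auto simp: measurable_between_def abs_le_max_abs_if_between
          finite_measure_axioms space_\<mu> space_kernel emeasure_kernel_space intro!: AE_I2\<close>)
  finally show ?thesis by (simp add: kop_def)
qed

lemma integral_kpow_invariant:
  assumes \<mu>: "invariant_prob M K \<mu>" and f: "measurable_between M f a b"
  shows "(\<integral>x. kpow K n f x \<partial>\<mu>) = (\<integral>x. f x \<partial>\<mu>)"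
proof (induction n)
  case (Suc n)
  then show ?case
    unfolding kpow_Suc using integral_kop_invariant[OF \<mu> kpow_between[OF f]] by simp
qed (simp add: kpow_def)

lemma summable_resolvent:
  assumes f: "measurable_between M f 0 1" and x: "x \<in> space M"
  shows "summable (\<lambda>k. (1/2) ^ (k+1) * kpow K k f x)"
proof (rule summable_comparison_test'[where g="\<lambda>k. (1/2::real) ^ (k+1)"])
  show "summable (\<lambda>k. (1/2::real) ^ (k+1))" using power_half_series by (simp add: sums_summable)
  fix k :: nat
  have "0 \<le> kpow K k f x" "kpow K k f x \<le> 1"
    using kpow_between[OF f, of k] x by (auto simp: measurable_between_def)
  then show "norm ((1/2) ^ (k+1) * kpow K k f x) \<le> (1/2::real) ^ (k+1)"
    by (simp add: abs_mult mult_left_le)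
qed

lemma resolvent_bounds:
  assumes f: "measurable_between M f 0 1" and x: "x \<in> space M"
  shows "0 \<le> resolvent K f x \<and> resolvent K f x \<le> 1 \<and> f x / 2 \<le> resolvent K f x"
proof -
  have kpow: "0 \<le> kpow K k f x \<and> kpow K k f x \<le> 1" for k
    using kpow_between[OF f, of k] x by (auto simp: measurable_between_def)
  note summable = summable_resolvent[OF f x]
  have "resolvent K f x \<le> (\<Sum>k. (1/2::real) ^ (k+1))"
    unfolding resolvent_def
    by (rule suminf_le[OF _ summable]) (use kpow power_half_series in \<open>auto simp: sums_summable mult_left_le\<close>)
  also have "\<dots> = 1" using power_half_series sums_unique by fastforce
  finally have "resolvent K f x \<le> 1" .
  moreover have "0 \<le> resolvent K f x"
    unfolding resolvent_def by (rule suminf_nonneg[OF summable]) (use kpow in simp)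
  moreover have "(\<Sum>k\<in>{0}. (1/2) ^ (k+1) * kpow K k f x) \<le> resolvent K f x"
    unfolding resolvent_def by (rule sum_le_suminf[OF summable]) (use kpow in auto)
  ultimately show ?thesis by (simp add: kpow_def)
qed

lemma resolvent_between:
  assumes f: "measurable_between M f 0 1"
  shows "measurable_between M (resolvent K f) 0 1"
proof -
  have [measurable]: "kpow K k f \<in> borel_measurable M" for k
    using kpow_between[OF f] by (simp add: measurable_between_def)
  have "resolvent K f \<in> borel_measurable M"
  proof (rule borel_measurable_LIMSEQ_real[where u="\<lambda>n x. \<Sum>k<n. (1/2) ^ (k+1) * kpow K k f x"])
    show "(\<lambda>n. \<Sum>k<n. (1/2) ^ (k+1) * kpow K k f x) \<longlonglongrightarrow> resolvent K f x" if "x \<in> space M" for x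
      unfolding resolvent_def by (intro summable_LIMSEQ summable_resolvent[OF f that])
  qed measurable
  then show ?thesis using resolvent_bounds[OF f] by (auto simp: measurable_between_def)
qed

lemma resolvent_indicator_Un:
  assumes A: "A \<in> sets M" and B: "B \<in> sets M" and disj: "A \<inter> B = {}" and x: "x \<in> space M"
  shows "resolvent K (indicator (A \<union> B)) x = resolvent K (indicator A) x + resolvent K (indicator B) x"
proof -
  have "indicator (A \<union> B) = (\<lambda>y. indicator A y + indicator B y :: real)"
    using disj by (auto simp: indicator_def fun_eq_iff)
  then have "kpow K k (indicator (A \<union> B)) x = kpow K k (indicator A) x + kpow K k (indicator B) x" for k
    using kpow_add_fun[OF measurable_between_indicator[OF A] measurable_between_indicator[OF B] x]
    by simp
  then show ?thesis
    unfolding resolvent_def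
    using suminf_add[OF summable_resolvent[OF measurable_between_indicator[OF A] x]
        summable_resolvent[OF measurable_between_indicator[OF B] x]]
    by (simp add: algebra_simps)
qed

lemma resolvent_indicator_decseq_tendsto_zero:
  assumes T: "range T \<subseteq> sets M" and dec: "decseq T" and empty: "(\<Inter>i. T i) = {}"
    and x: "x \<in> space M"
  shows "(\<lambda>i. resolvent K (indicator (T i)) x) \<longlonglongrightarrow> 0"
proof -
  have "(\<lambda>i. \<Sum>k. (1/2) ^ (k+1) * kpow K k (indicator (T i)) x) \<longlonglongrightarrow> (\<Sum>k. (1/2::real) ^ (k+1) * 0)"
  proof (rule tannerys_theorem[where M="\<lambda>k. (1/2::real) ^ (k+1)", THEN conjunct2, THEN conjunct2])
    show "((\<lambda>i. (1/2) ^ (k+1) * kpow K k (indicator (T i)) x) \<longlongrightarrow> (1/2::real) ^ (k+1) * 0) sequentially"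
      for k by (intro tendsto_mult tendsto_const kpow_indicator_decseq_tendsto_zero[OF T dec empty x])
    show "summable (\<lambda>k. (1/2::real) ^ (k+1))" using power_half_series by (simp add: sums_summable)
    have "norm ((1/2) ^ (k+1) * kpow K k (indicator (T i)) x) \<le> (1/2::real) ^ (k+1)" for k i
      using kpow_between[OF measurable_between_indicator[of "T i"], of k] T x
      by (auto simp: measurable_between_def abs_mult mult_left_le)
    then show "\<forall>\<^sub>F (k, i) in at_top \<times>\<^sub>F sequentially.
        norm ((1/2) ^ (k+1) * kpow K k (indicator (T i)) x) \<le> (1/2::real) ^ (k+1)"
      by (intro always_eventually) auto
  qed simp
  then show ?thesis unfolding resolvent_def by simp
qed

end

section \<open>Contraction of oscillation and the invariant measure\<close>

locale doeblin_operator = markov_operator +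
  fixes c :: real
  assumes c: "0 \<le> c" "c < 1" and nonempty: "space M \<noteq> {}"
    and oscillation_kop:
      "\<And>g x y. measurable_between M g 0 1 \<Longrightarrow> x \<in> space M \<Longrightarrow> y \<in> space M \<Longrightarrow> kop K g x - kop K g y \<le> c"
begin

lemma oscillation_kop_scaled:
  assumes g: "measurable_between M g a (a + d)" "0 \<le> d" and x: "x \<in> space M" and y: "y \<in> space M"
  shows "kop K g x - kop K g y \<le> c * d"
proof (cases "d = 0")
  case True
  then have "\<And>z. z \<in> space M \<Longrightarrow> g z = a" using g by (auto simp: measurable_between_def)
  then have "kop K g x = a" "kop K g y = a" using x y kop_cong[of g "\<lambda>_. a"] kop_const by auto
  then show ?thesis using True by simp
next
  case False
  then have d: "d > 0" using g by simp
  define h where "h y = (1/d) * g y + (- a / d)" for y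
  have "measurable_between M h 0 1"
    using g d unfolding measurable_between_def h_def by (auto simp: field_simps)
  then have "kop K h x - kop K h y \<le> c" using oscillation_kop x y by blast
  moreover have "kop K h z = (1/d) * kop K g z + (- a / d)" if "z \<in> space M" for z
    unfolding h_def using kop_affine[OF g(1) that] .
  ultimately have "(1/d) * (kop K g x - kop K g y) \<le> c" using x y by (simp add: algebra_simps)
  then show ?thesis using d by (simp add: field_simps)
qed

lemma kpow_oscillation: "measurable_between M f 0 1 \<Longrightarrow> \<exists>a. measurable_between M (kpow K n f) a (a + c ^ n)"
proof (induction n)
  case 0
  then show ?case by (intro exI[of _ 0]) (simp add: kpow_def)
next
  case (Suc n)
  then obtain a where a: "measurable_between M (kpow K n f) a (a + c ^ n)" by blast
  have Suc_between: "measurable_between M (kpow K (Suc n) f) a (a + c ^ n)"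
    unfolding kpow_Suc using a by (rule kop_between)
  have "\<exists>a'. \<forall>x\<in>space M. a' \<le> kpow K (Suc n) f x \<and> kpow K (Suc n) f x \<le> a' + c * c ^ n"
  proof (rule ex_interval_if_oscillation_le[OF nonempty])
    show "\<And>x. x \<in> space M \<Longrightarrow> a \<le> kpow K (Suc n) f x"
      using Suc_between by (auto simp: measurable_between_def)
    show "\<And>x y. x \<in> space M \<Longrightarrow> y \<in> space M \<Longrightarrow> kpow K (Suc n) f x - kpow K (Suc n) f y \<le> c * c ^ n"
      unfolding kpow_Suc by (rule oscillation_kop_scaled[OF a]) (use c in auto)
  qed
  then show ?case using Suc_between by (auto simp: measurable_between_def)
qed

lemma kpow_tail_oscillation:
  assumes f: "measurable_between M f 0 1"
  shows "\<exists>a. \<forall>k\<ge>n. \<forall>x\<in>space M. a \<le> kpow K k f x \<and> kpow K k f x \<le> a + c ^ n"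
proof -
  obtain a where a: "measurable_between M (kpow K n f) a (a + c ^ n)" using kpow_oscillation[OF f] by blast
  have "a \<le> kpow K k f x \<and> kpow K k f x \<le> a + c ^ n" if "k \<ge> n" "x \<in> space M" for k x
    using kpow_between[OF a, of "k - n"] kpow_add[of "k - n" n f] that
    by (simp add: measurable_between_def)
  then show ?thesis by blast
qed

definition base_point :: 'a where "base_point = (SOME x. x \<in> space M)"

lemma base_point: "base_point \<in> space M"
  unfolding base_point_def using nonempty by (simp add: some_in_eq)

text \<open>Since the oscillation of \<open>P\<^sup>n f\<close> tends to \<open>0\<close>, the limit is the same at every point.\<close>
definition lim_kpow :: "('a \<Rightarrow> real) \<Rightarrow> real" where
  "lim_kpow f = lim (\<lambda>n. kpow K n f base_point)"

lemma kpow_tendsto_lim_kpow: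
  assumes f: "measurable_between M f 0 1"
  shows "(\<lambda>n. kpow K n f base_point) \<longlonglongrightarrow> lim_kpow f"
proof -
  have "Cauchy (\<lambda>n. kpow K n f base_point)"
  proof (rule CauchyI)
    fix e :: real assume "0 < e"
    then obtain N where N: "c ^ N < e" using ex_power_less c by blast
    obtain a where a: "\<forall>k\<ge>N. \<forall>x\<in>space M. a \<le> kpow K k f x \<and> kpow K k f x \<le> a + c ^ N"
      using kpow_tail_oscillation[OF f] by blast
    have "norm (kpow K m f base_point - kpow K n f base_point) < e" if "N \<le> m" "N \<le> n" for m n
      using a[rule_format, OF that(1) base_point] a[rule_format, OF that(2) base_point] N by auto
    then show "\<exists>M'. \<forall>m\<ge>M'. \<forall>n\<ge>M'. norm (kpow K m f base_point - kpow K n f base_point) < e"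
      by blast
  qed
  then show ?thesis unfolding lim_kpow_def by (simp add: Cauchy_convergent_iff convergent_LIMSEQ_iff)
qed

lemma lim_kpow_bounds:
  assumes f: "measurable_between M f 0 1"
    and bounds: "\<And>k. k \<ge> n \<Longrightarrow> a \<le> kpow K k f base_point \<and> kpow K k f base_point \<le> b"
  shows "a \<le> lim_kpow f \<and> lim_kpow f \<le> b"
proof
  show "a \<le> lim_kpow f"
    by (rule LIMSEQ_le_const[OF kpow_tendsto_lim_kpow[OF f]]) (use bounds in blast)
  show "lim_kpow f \<le> b"
    by (rule LIMSEQ_le_const2[OF kpow_tendsto_lim_kpow[OF f]]) (use bounds in blast)
qed

lemma abs_kpow_minus_lim_kpow_le:
  assumes f: "measurable_between M f 0 1" and x: "x \<in> space M"
  shows "\<bar>kpow K n f x - lim_kpow f\<bar> \<le> c ^ n"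
proof -
  obtain a where a: "\<forall>k\<ge>n. \<forall>x\<in>space M. a \<le> kpow K k f x \<and> kpow K k f x \<le> a + c ^ n"
    using kpow_tail_oscillation[OF f] by blast
  have "a \<le> lim_kpow f \<and> lim_kpow f \<le> a + c ^ n"
    by (rule lim_kpow_bounds[OF f]) (use a base_point in blast)
  moreover have "a \<le> kpow K n f x \<and> kpow K n f x \<le> a + c ^ n" using a x by blast
  ultimately show ?thesis by arith
qed

lemma lim_kpow_between:
  assumes "measurable_between M f 0 1" "measurable_between M f a b"
  shows "a \<le> lim_kpow f \<and> lim_kpow f \<le> b"
  by (rule lim_kpow_bounds[OF assms(1), of 0])
     (use kpow_between[OF assms(2)] base_point in \<open>auto simp: measurable_between_def\<close>)

lemma lim_kpow_sum:
  assumes J: "finite J" and f: "\<And>j. j \<in> J \<Longrightarrow> measurable_between M (f j) 0 1"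
    and F: "measurable_between M (\<lambda>y. \<Sum>j\<in>J. a j * f j y) 0 1"
  shows "lim_kpow (\<lambda>y. \<Sum>j\<in>J. a j * f j y) = (\<Sum>j\<in>J. a j * lim_kpow (f j))"
proof -
  have "(\<lambda>n. \<Sum>j\<in>J. a j * kpow K n (f j) base_point) \<longlonglongrightarrow> (\<Sum>j\<in>J. a j * lim_kpow (f j))"
    using f by (intro tendsto_sum tendsto_mult tendsto_const kpow_tendsto_lim_kpow) auto
  moreover have "kpow K n (\<lambda>y. \<Sum>j\<in>J. a j * f j y) base_point = (\<Sum>j\<in>J. a j * kpow K n (f j) base_point)"
    for n by (rule kpow_sum[OF J f base_point])
  ultimately have "(\<lambda>n. kpow K n (\<lambda>y. \<Sum>j\<in>J. a j * f j y) base_point) \<longlonglongrightarrow> (\<Sum>j\<in>J. a j * lim_kpow (f j))"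
    by simp
  then show ?thesis using kpow_tendsto_lim_kpow[OF F] LIMSEQ_unique by blast
qed

lemma lim_kpow_add:
  assumes f: "measurable_between M f 0 1" and g: "measurable_between M g 0 1"
    and fg: "measurable_between M (\<lambda>y. f y + g y) 0 1"
  shows "lim_kpow (\<lambda>y. f y + g y) = lim_kpow f + lim_kpow g"
proof -
  have "(\<lambda>n. kpow K n (\<lambda>y. f y + g y) base_point) \<longlonglongrightarrow> lim_kpow f + lim_kpow g"
    unfolding kpow_add_fun[OF f g base_point] by (intro tendsto_add kpow_tendsto_lim_kpow f g)
  then show ?thesis using kpow_tendsto_lim_kpow[OF fg] LIMSEQ_unique by blast
qed

lemma lim_kpow_indicator_Un:
  assumes A: "A \<in> sets M" and B: "B \<in> sets M" and disj: "A \<inter> B = {}"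
  shows "lim_kpow (indicator (A \<union> B)) = lim_kpow (indicator A) + lim_kpow (indicator B)"
proof -
  have "indicator (A \<union> B) = (\<lambda>y. indicator A y + indicator B y :: real)"
    using disj by (auto simp: indicator_def fun_eq_iff)
  moreover have "measurable_between M (\<lambda>y. indicator A y + indicator B y) 0 1"
    using measurable_between_indicator[OF sets.Un[OF A B]] calculation by simp
  ultimately show ?thesis
    using lim_kpow_add[OF measurable_between_indicator[OF A] measurable_between_indicator[OF B]] by simp
qed

lemma abs_lim_kpow_diff_le:
  assumes f: "measurable_between M f 0 1" and g: "measurable_between M g 0 1"
    and fg: "\<And>x. x \<in> space M \<Longrightarrow> \<bar>f x - g x\<bar> \<le> e"
  shows "\<bar>lim_kpow f - lim_kpow g\<bar> \<le> e"
proof -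
  have diff: "measurable_between M (\<lambda>x. f x - g x) (-e) e"
    unfolding measurable_between_def
  proof (intro conjI ballI)
    show "(\<lambda>x. f x - g x) \<in> borel_measurable M"
      using f g by (auto simp: measurable_between_def intro!: borel_measurable_diff)
    show "- e \<le> f x - g x" "f x - g x \<le> e" if "x \<in> space M" for x using fg[OF that] by arith+
  qed
  have "\<bar>kpow K n f base_point - kpow K n g base_point\<bar> \<le> e" for n
  proof -
    have "- e \<le> kpow K n (\<lambda>x. f x - g x) base_point \<and> kpow K n (\<lambda>x. f x - g x) base_point \<le> e"
      using kpow_between[OF diff, of n] base_point unfolding measurable_between_def by blast
    then show ?thesis unfolding kpow_diff_fun[OF f g base_point] by (auto simp: abs_le_iff)
  qed
  moreover have "(\<lambda>n. \<bar>kpow K n f base_point - kpow K n g base_point\<bar>) \<longlonglongrightarrow> \<bar>lim_kpow f - lim_kpow g\<bar>"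
    by (intro tendsto_rabs tendsto_diff kpow_tendsto_lim_kpow f g)
  ultimately show ?thesis by (intro LIMSEQ_le_const2) auto
qed

lemma lim_kpow_kop:
  assumes f: "measurable_between M f 0 1"
  shows "lim_kpow (kop K f) = lim_kpow f"
proof -
  have "(\<lambda>n. kpow K (Suc n) f base_point) \<longlonglongrightarrow> lim_kpow f"
    using kpow_tendsto_lim_kpow[OF f] by (rule LIMSEQ_Suc)
  then show ?thesis
    unfolding kpow_Suc_right using kpow_tendsto_lim_kpow[OF kop_between[OF f]] LIMSEQ_unique by blast
qed

lemma lim_kpow_indicator_decseq_tendsto_zero:
  assumes T: "range T \<subseteq> sets M" and dec: "decseq T" and empty: "(\<Inter>i. T i) = {}"
  shows "(\<lambda>i. lim_kpow (indicator (T i))) \<longlonglongrightarrow> 0"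
proof (rule LIMSEQ_I)
  fix r :: real assume "0 < r"
  then obtain n where n: "c ^ n < r / 2" using ex_power_less[OF c, of "r/2"] by auto
  obtain i0 where i0: "\<forall>i\<ge>i0. \<bar>kpow K n (indicator (T i)) base_point\<bar> < r / 2"
    using LIMSEQ_D[OF kpow_indicator_decseq_tendsto_zero[OF T dec empty base_point], of "r/2"] \<open>0 < r\<close>
    by auto
  have approx: "\<bar>kpow K n (indicator (T i)) base_point - lim_kpow (indicator (T i))\<bar> \<le> c ^ n" for i
    using T by (intro abs_kpow_minus_lim_kpow_le measurable_between_indicator base_point) auto
  have "\<bar>lim_kpow (indicator (T i))\<bar> < r" if "i \<ge> i0" for i
    using approx[of i] i0[rule_format, OF that] n by arith
  then show "\<exists>i0. \<forall>i\<ge>i0. norm (lim_kpow (indicator (T i)) - 0) < r" by auto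
qed

definition limit_measure :: "'a measure" where
  "limit_measure = measure_of (space M) (sets M) (\<lambda>A. ennreal (lim_kpow (indicator A)))"

lemma sets_limit_measure[simp]: "sets limit_measure = sets M"
  and space_limit_measure[simp]: "space limit_measure = space M"
  by (simp_all add: limit_measure_def)

lemma measurable_between_limit_measure[simp]:
  "measurable_between limit_measure f a b \<longleftrightarrow> measurable_between M f a b"
  by (rule measurable_between_cong_sets) simp

lemma emeasure_limit_measure:
  assumes "A \<in> sets M"
  shows "emeasure limit_measure A = ennreal (lim_kpow (indicator A))"
  unfolding limit_measure_def
proof (rule emeasure_measure_of_additive_continuous[OF _ _ _ assms])
  show "0 \<le> lim_kpow (indicator A)" if "A \<in> sets M" for A
    using lim_kpow_between measurable_between_indicator[OF that] by blast
qed (simp_all add: lim_kpow_indicator_Un lim_kpow_indicator_decseq_tendsto_zero)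

lemma measure_limit_measure:
  assumes A: "A \<in> sets M"
  shows "measure limit_measure A = lim_kpow (indicator A)"
proof -
  have "0 \<le> lim_kpow (indicator A)"
    using lim_kpow_between measurable_between_indicator[OF A] by blast
  then show ?thesis by (simp add: measure_def emeasure_limit_measure[OF A])
qed

lemma prob_space_limit_measure: "prob_space limit_measure"
proof (rule prob_spaceI)
  have "measurable_between M (indicator (space M)) 1 1"
    by (auto simp: measurable_between_def)
  then have "1 \<le> lim_kpow (indicator (space M)) \<and> lim_kpow (indicator (space M)) \<le> 1"
    by (rule lim_kpow_between[OF measurable_between_indicator[OF sets.top]])
  then have "lim_kpow (indicator (space M)) = 1" by linarith
  then show "emeasure limit_measure (space limit_measure) = 1"
    using emeasure_limit_measure[OF sets.top] by simp
qed
lemma integral_limit_measure_indicator_sum: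
  assumes J: "finite J" and B: "\<And>j. j \<in> J \<Longrightarrow> B j \<in> sets M"
    and s: "measurable_between M (\<lambda>y. \<Sum>j\<in>J. a j * indicator (B j) y) 0 1"
  shows "(\<integral>y. (\<Sum>j\<in>J. a j * indicator (B j) y) \<partial>limit_measure)
    = lim_kpow (\<lambda>y. \<Sum>j\<in>J. a j * indicator (B j) y)"
proof -
  interpret prob_space limit_measure by (rule prob_space_limit_measure)
  have "integrable limit_measure (indicator (B j) :: 'a \<Rightarrow> real)" if "j \<in> J" for j
    by (rule integrable_if_measurable_between[of _ 0 1]) (use B[OF that] in \<open>simp add: measurable_between_indicator\<close>)
  then have "(\<integral>y. (\<Sum>j\<in>J. a j * indicator (B j) y) \<partial>limit_measure)
      = (\<Sum>j\<in>J. a j * (\<integral>y. indicator (B j) y \<partial>limit_measure))"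
    by (simp add: Bochner_Integration.integral_sum)
  also have "\<dots> = (\<Sum>j\<in>J. a j * lim_kpow (indicator (B j)))"
    using B sets.sets_into_space by (intro sum.cong refl) (simp add: Int_absorb2 measure_limit_measure)
  also have "\<dots> = lim_kpow (\<lambda>y. \<Sum>j\<in>J. a j * indicator (B j) y)"
    using J B s by (intro lim_kpow_sum[symmetric]) (auto simp: measurable_between_indicator)
  finally show ?thesis .
qed

lemma integral_limit_measure:
  assumes g: "measurable_between M g 0 1"
  shows "(\<integral>y. g y \<partial>limit_measure) = lim_kpow g"
proof -
  interpret prob_space limit_measure by (rule prob_space_limit_measure)
  have "\<bar>(\<integral>y. g y \<partial>limit_measure) - lim_kpow g\<bar> \<le> 2 * (1/2) ^ n" for n
  proof -
    define k :: nat where "k = 2 ^ n"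
    have "k \<ge> 1" unfolding k_def by simp
    then obtain B where B: "\<And>j. B j \<in> sets M"
      and step: "measurable_between M (\<lambda>y. \<Sum>j\<in>{1..k}. (1/k) * indicator (B j) y) 0 1"
      and diff: "measurable_between M (\<lambda>y. g y - (\<Sum>j\<in>{1..k}. (1/k) * indicator (B j) y)) 0 (1/k)"
      using step_function_approx[OF g] by blast
    define s where "s = (\<lambda>y. \<Sum>j\<in>{1..k}. (1/k) * indicator (B j) y)"
    have s: "measurable_between M s 0 1" using step unfolding s_def .
    have gs: "measurable_between M (\<lambda>y. g y - s y) 0 (1/k)" using diff unfolding s_def .
    have s_integral: "(\<integral>y. s y \<partial>limit_measure) = lim_kpow s"
      unfolding s_def using B step by (intro integral_limit_measure_indicator_sum) auto
    have "0 \<le> (\<integral>y. g y - s y \<partial>limit_measure) \<and> (\<integral>y. g y - s y \<partial>limit_measure) \<le> 1/k"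
      using gs by (intro integral_between) simp
    moreover have "integrable limit_measure g" "integrable limit_measure s"
      using g s by (auto intro: integrable_if_measurable_between[of _ 0 1])
    ultimately have "\<bar>(\<integral>y. g y \<partial>limit_measure) - (\<integral>y. s y \<partial>limit_measure)\<bar> \<le> 1/k"
      by simp
    moreover have "\<bar>lim_kpow g - lim_kpow s\<bar> \<le> 1/k"
      using gs by (intro abs_lim_kpow_diff_le[OF g s]) (auto simp: measurable_between_def abs_le_iff)
    moreover have "2 / real k = 2 * (1/2) ^ n"
      by (simp add: k_def power_one_over)
    ultimately show ?thesis using s_integral by linarith
  qed
  then show ?thesis by (intro eq_if_abs_diff_le_geometric[of "1/2"]) auto
qed

lemma invariant_prob_limit_measure: "invariant_prob M K limit_measure"
  unfolding invariant_prob_def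
proof (intro conjI ballI)
  fix A assume A: "A \<in> sets M"
  have "(\<integral>x. kop K (indicator A) x \<partial>limit_measure) = lim_kpow (kop K (indicator A))"
    by (rule integral_limit_measure[OF kop_between[OF measurable_between_indicator[OF A]]])
  also have "\<dots> = lim_kpow (indicator A)"
    by (rule lim_kpow_kop[OF measurable_between_indicator[OF A]])
  finally show "(\<integral>x. kop K (indicator A) x \<partial>limit_measure) = measure limit_measure A"
    using measure_limit_measure[OF A] by simp
qed (simp_all add: prob_space_limit_measure)

lemma invariant_prob_eq_limit_measure:
  assumes \<mu>: "invariant_prob M K \<mu>"
  shows "\<mu> = limit_measure"
proof (rule measure_eqI)
  have "prob_space \<mu>" and sets_\<mu>: "sets \<mu> = sets M" using \<mu> by (auto simp: invariant_prob_def)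
  interpret prob_space \<mu> by fact
  show "sets \<mu> = sets limit_measure" using sets_\<mu> by simp
  fix A assume "A \<in> sets \<mu>"
  then have A: "A \<in> sets M" using sets_\<mu> by simp
  note A01 = measurable_between_indicator[OF A]
  have "\<bar>measure \<mu> A - lim_kpow (indicator A)\<bar> \<le> 1 * c ^ n" for n
  proof -
    have integral_eq: "(\<integral>x. kpow K n (indicator A) x \<partial>\<mu>) = measure \<mu> A"
      using integral_kpow_invariant[OF \<mu> A01] A sets.sets_into_space
      by (simp add: sets_eq_imp_space_eq[OF sets_\<mu>] Int_absorb2)
    have "measurable_between M (kpow K n (indicator A))
        (lim_kpow (indicator A) - c ^ n) (lim_kpow (indicator A) + c ^ n)"
      unfolding measurable_between_def
    proof (intro conjI ballI)
      show "kpow K n (indicator A) \<in> borel_measurable M"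
        using kpow_between[OF A01] by (simp add: measurable_between_def)
      fix x assume x: "x \<in> space M"
      show "lim_kpow (indicator A) - c ^ n \<le> kpow K n (indicator A) x"
        "kpow K n (indicator A) x \<le> lim_kpow (indicator A) + c ^ n"
        using abs_kpow_minus_lim_kpow_le[OF A01 x, of n] by arith+
    qed
    then have "measurable_between \<mu> (kpow K n (indicator A))
        (lim_kpow (indicator A) - c ^ n) (lim_kpow (indicator A) + c ^ n)"
      using measurable_between_cong_sets[OF sets_\<mu>] by simp
    then have "lim_kpow (indicator A) - c ^ n \<le> (\<integral>x. kpow K n (indicator A) x \<partial>\<mu>)
        \<and> (\<integral>x. kpow K n (indicator A) x \<partial>\<mu>) \<le> lim_kpow (indicator A) + c ^ n"
      by (rule integral_between)
    then show ?thesis using integral_eq by (simp add: abs_le_iff)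
  qed
  then have "measure \<mu> A = lim_kpow (indicator A)" by (rule eq_if_abs_diff_le_geometric[OF c])
  then show "emeasure \<mu> A = emeasure limit_measure A"
    using emeasure_limit_measure[OF A] by (simp add: emeasure_eq_measure)
qed

lemma ex1_invariant_prob: "\<exists>!\<mu>. invariant_prob M K \<mu>"
  using invariant_prob_limit_measure invariant_prob_eq_limit_measure by blast

end

section \<open>Families of mutually singular measures\<close>

lemma mutually_singular_separating_sets:
  assumes sing: "\<And>\<mu> \<nu>. \<mu> \<in> G \<Longrightarrow> \<nu> \<in> G \<Longrightarrow> \<mu> \<noteq> \<nu> \<Longrightarrow> mutually_singular M \<mu> \<nu>"
  obtains N where "\<And>\<mu> \<nu>. \<mu> \<in> G \<Longrightarrow> \<nu> \<in> G \<Longrightarrow> \<mu> \<noteq> \<nu> \<Longrightarrow>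
    N \<mu> \<nu> \<in> sets M \<and> emeasure \<mu> (N \<mu> \<nu>) = 0 \<and> emeasure \<nu> (space M - N \<mu> \<nu>) = 0"
proof -
  define N where "N \<mu> \<nu> = (SOME A. A \<in> sets M \<and> emeasure \<mu> A = 0 \<and> emeasure \<nu> (space M - A) = 0)"
    for \<mu> \<nu> :: "'a measure"
  show ?thesis
  proof (rule that)
    fix \<mu> \<nu> assume "\<mu> \<in> G" "\<nu> \<in> G" "\<mu> \<noteq> \<nu>"
    then have "\<exists>A. A \<in> sets M \<and> emeasure \<mu> A = 0 \<and> emeasure \<nu> (space M - A) = 0"
      using sing unfolding mutually_singular_def by blast
    then show "N \<mu> \<nu> \<in> sets M \<and> emeasure \<mu> (N \<mu> \<nu>) = 0 \<and> emeasure \<nu> (space M - N \<mu> \<nu>) = 0"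
      unfolding N_def by (rule someI_ex)
  qed
qed

lemma mutually_singular_disjoint_full_sets:
  assumes G: "finite G" and prob: "\<And>\<mu>. \<mu> \<in> G \<Longrightarrow> prob_space \<mu> \<and> sets \<mu> = sets M"
    and sing: "\<And>\<mu> \<nu>. \<mu> \<in> G \<Longrightarrow> \<nu> \<in> G \<Longrightarrow> \<mu> \<noteq> \<nu> \<Longrightarrow> mutually_singular M \<mu> \<nu>"
  obtains D where "\<And>\<mu>. \<mu> \<in> G \<Longrightarrow> D \<mu> \<in> sets M" "\<And>\<mu>. \<mu> \<in> G \<Longrightarrow> measure \<mu> (D \<mu>) = 1"
    "disjoint_family_on D G"
proof -
  obtain N where N: "\<And>\<mu> \<nu>. \<mu> \<in> G \<Longrightarrow> \<nu> \<in> G \<Longrightarrow> \<mu> \<noteq> \<nu> \<Longrightarrow>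
    N \<mu> \<nu> \<in> sets M \<and> emeasure \<mu> (N \<mu> \<nu>) = 0 \<and> emeasure \<nu> (space M - N \<mu> \<nu>) = 0"
    using mutually_singular_separating_sets[OF sing] by blast
  define Full where "Full \<mu> = {x\<in>space M. \<forall>\<nu>\<in>G-{\<mu>}. x \<in> N \<nu> \<mu>}" for \<mu>
  define D where "D \<mu> = Full \<mu> - (\<Union>\<nu>\<in>G-{\<mu>}. Full \<nu>)" for \<mu>
  have Full: "Full \<mu> \<in> sets M" if "\<mu> \<in> G" for \<mu>
    unfolding Full_def
  proof (rule sets.sets_Collect_finite_All)
    show "finite (G - {\<mu>})" using G by simp
    fix \<nu> assume "\<nu> \<in> G - {\<mu>}"
    then have "N \<nu> \<mu> \<in> sets M" using N[of \<nu> \<mu>] that by auto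
    moreover have "{x\<in>space M. x \<in> N \<nu> \<mu>} = N \<nu> \<mu>" using calculation sets.sets_into_space by auto
    ultimately show "{x\<in>space M. x \<in> N \<nu> \<mu>} \<in> sets M" by simp
  qed
  have D: "D \<mu> \<in> sets M" if "\<mu> \<in> G" for \<mu>
    unfolding D_def using Full that G by (intro sets.Diff sets.finite_UN) auto
  have "disjoint_family_on D G"
    unfolding disjoint_family_on_def D_def by auto
  moreover have "measure \<mu> (D \<mu>) = 1" if \<mu>: "\<mu> \<in> G" for \<mu>
  proof -
    interpret prob_space \<mu> using prob \<mu> by blast
    have sets_\<mu>: "sets \<mu> = sets M" using prob \<mu> by blast
    have space_\<mu>: "space \<mu> = space M" using sets_\<mu> by (rule sets_eq_imp_space_eq)
    have in_N: "AE x in \<mu>. x \<in> N \<nu> \<mu>" if "\<nu> \<in> G - {\<mu>}" for \<nu>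
    proof -
      have "space M - N \<nu> \<mu> \<in> null_sets \<mu>" using N[of \<nu> \<mu>] that \<mu> sets_\<mu> by (auto intro!: null_setsI)
      from AE_not_in[OF this] show ?thesis
        by (rule AE_mp[OF _ AE_I2]) (use space_\<mu> in blast)
    qed
    have not_in_N: "AE x in \<mu>. x \<notin> N \<mu> \<nu>" if "\<nu> \<in> G - {\<mu>}" for \<nu>
    proof -
      have "N \<mu> \<nu> \<in> null_sets \<mu>" using N[of \<mu> \<nu>] that \<mu> sets_\<mu> by (auto intro!: null_setsI)
      then show ?thesis by (rule AE_not_in)
    qed
    have finite: "finite (G - {\<mu>})" using G by simp
    have all_in_N: "AE x in \<mu>. \<forall>\<nu>\<in>G-{\<mu>}. x \<in> N \<nu> \<mu>" by (rule AE_finite_allI[OF finite in_N])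
    have all_not_in_N: "AE x in \<mu>. \<forall>\<nu>\<in>G-{\<mu>}. x \<notin> N \<mu> \<nu>" by (rule AE_finite_allI[OF finite not_in_N])
    have "AE x in \<mu>. x \<in> D \<mu>"
      using AE_space all_in_N all_not_in_N
    proof eventually_elim
      case (elim x)
      then have x_Full: "x \<in> Full \<mu>" by (simp add: Full_def space_\<mu>)
      have "x \<notin> Full \<nu>" if \<nu>: "\<nu> \<in> G - {\<mu>}" for \<nu>
      proof
        assume "x \<in> Full \<nu>"
        then have "x \<in> N \<mu> \<nu>" unfolding Full_def using \<nu> \<mu> by blast
        then show False using elim \<nu> by blast
      qed
      then show "x \<in> D \<mu>" unfolding D_def using x_Full by blast
    qed
    then show "measure \<mu> (D \<mu>) = 1" using prob_eq_1 D[OF \<mu>] sets_\<mu> by simp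
  qed
  ultimately show ?thesis using D that by blast
qed

section \<open>The resolvent measure and the main estimates\<close>

locale markov_operator_measure = markov_operator +
  fixes m :: "'a measure"
  assumes finite_m: "finite_measure m" and sets_m: "sets m = sets M"
begin

abbreviation mR :: "'a measure" where "mR \<equiv> comp_resolvent M m K"

lemma space_m: "space m = space M"
  using sets_m by (rule sets_eq_imp_space_eq)

lemma integrable_m: "measurable_between M f a b \<Longrightarrow> integrable m f"
  using finite_measure.integrable_if_measurable_between[OF finite_m]
  by (simp add: measurable_between_cong_sets[OF sets_m])

lemma integral_m_indicator: "A \<in> sets M \<Longrightarrow> (\<integral>x. indicator A x \<partial>m) = measure m A"
  using sets.sets_into_space[of A M] by (simp add: space_m Int_absorb2)

lemma sets_comp_resolvent[simp]: "sets mR = sets M"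
  and space_comp_resolvent[simp]: "space mR = space M"
  by (simp_all add: comp_resolvent_def)

lemma integral_resolvent_indicator_bounds:
  assumes A: "A \<in> sets M"
  shows "0 \<le> (\<integral>x. resolvent K (indicator A) x \<partial>m)
    \<and> measure m A / 2 \<le> (\<integral>x. resolvent K (indicator A) x \<partial>m)"
proof -
  note RA = resolvent_between[OF measurable_between_indicator[OF A]]
  have "0 \<le> (\<integral>x. resolvent K (indicator A) x \<partial>m)"
    using RA by (intro integral_nonneg_AE AE_I2) (auto simp: measurable_between_def space_m)
  moreover have "(\<integral>x. indicator A x / 2 \<partial>m) \<le> (\<integral>x. resolvent K (indicator A) x \<partial>m)"
    using resolvent_bounds[OF measurable_between_indicator[OF A]] A
    by (intro integral_mono integrable_m[OF RA] integrable_divide_zero integrable_m[of _ 0 1])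
       (auto simp: space_m measurable_between_indicator)
  ultimately show ?thesis using integral_m_indicator[OF A] by simp
qed

lemma emeasure_comp_resolvent:
  assumes "A \<in> sets M"
  shows "emeasure mR A = ennreal (\<integral>x. resolvent K (indicator A) x \<partial>m)"
  unfolding comp_resolvent_def
proof (rule emeasure_measure_of_additive_continuous[OF _ _ _ assms])
  show "0 \<le> (\<integral>x. resolvent K (indicator A) x \<partial>m)" if "A \<in> sets M" for A
    using integral_resolvent_indicator_bounds[OF that] by blast
  fix A B assume A: "A \<in> sets M" and B: "B \<in> sets M" and "A \<inter> B = {}"
  then show "(\<integral>x. resolvent K (indicator (A \<union> B)) x \<partial>m)
      = (\<integral>x. resolvent K (indicator A) x \<partial>m) + (\<integral>x. resolvent K (indicator B) x \<partial>m)"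
    using resolvent_between[OF measurable_between_indicator] resolvent_indicator_Un
    by (subst Bochner_Integration.integral_add[symmetric])
       (auto intro!: integrable_m Bochner_Integration.integral_cong simp: space_m)
next
  fix T :: "nat \<Rightarrow> 'a set" assume T: "range T \<subseteq> sets M" "decseq T" "(\<Inter>i. T i) = {}"
  have "(\<lambda>i. \<integral>x. resolvent K (indicator (T i)) x \<partial>m) \<longlonglongrightarrow> (\<integral>x. 0 \<partial>m)"
  proof (rule integral_dominated_convergence[where w="\<lambda>_. 1"])
    show "resolvent K (indicator (T i)) \<in> borel_measurable m" for i
      using resolvent_between[OF measurable_between_indicator, of "T i"] T
      by (auto simp: measurable_between_def measurable_cong_sets[OF sets_m])
    show "AE x in m. (\<lambda>i. resolvent K (indicator (T i)) x) \<longlonglongrightarrow> 0"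
      using resolvent_indicator_decseq_tendsto_zero[OF T] by (intro AE_I2) (simp add: space_m)
    show "AE x in m. norm (resolvent K (indicator (T i)) x) \<le> 1" for i
      using resolvent_bounds[OF measurable_between_indicator, of "T i"] T by (auto simp: space_m)
  qed (use finite_m in \<open>simp_all add: finite_measure.integrable_const\<close>)
  then show "(\<lambda>i. \<integral>x. resolvent K (indicator (T i)) x \<partial>m) \<longlonglongrightarrow> 0" by simp
qed

lemma measure_comp_resolvent:
  "A \<in> sets M \<Longrightarrow> measure mR A = (\<integral>x. resolvent K (indicator A) x \<partial>m)"
  using emeasure_comp_resolvent integral_resolvent_indicator_bounds by (simp add: measure_def)

lemma finite_measure_comp_resolvent: "finite_measure mR"
  by (rule finite_measureI) (simp add: emeasure_comp_resolvent)

lemma measure_le_comp_resolvent: "A \<in> sets M \<Longrightarrow> measure m A \<le> 2 * measure mR A"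
  using integral_resolvent_indicator_bounds measure_comp_resolvent by fastforce

end

locale phi_bounded_kernel = markov_operator_measure +
  fixes \<phi> :: "real \<Rightarrow> real" and \<delta> :: real
  assumes \<phi>_cont: "continuous_on {0..} \<phi>" and \<phi>_range: "\<phi> ` {0..} \<subseteq> {0..}" and \<phi>_0: "\<phi> 0 = 0"
    and \<delta>: "0 \<le> \<delta>" "\<delta> < 1"
    and bound: "\<And>f x. f \<in> borel_measurable M \<Longrightarrow> (\<forall>y\<in>space M. 0 \<le> f y \<and> f y \<le> 1)
                  \<Longrightarrow> x \<in> space M \<Longrightarrow> kop K f x \<le> \<phi> (\<integral>y. f y \<partial>m) + \<delta>"
begin

lemma phi_nonneg: "0 \<le> s \<Longrightarrow> 0 \<le> \<phi> s"
  using \<phi>_range by auto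

lemma kop_le: "measurable_between M f 0 1 \<Longrightarrow> x \<in> space M \<Longrightarrow> kop K f x \<le> \<phi> (\<integral>y. f y \<partial>m) + \<delta>"
  using bound by (simp add: measurable_between_def)

lemma kop_indicator_le:
  assumes A: "A \<in> sets M" and x: "x \<in> space M"
  shows "kop K (indicator A) x \<le> \<phi> (measure m A) + \<delta>"
  using kop_le[OF measurable_between_indicator[OF A] x] integral_m_indicator[OF A] by simp

lemma cesaro_indicator_le:
  assumes A: "A \<in> sets M" and n: "n \<ge> 1" and x: "x \<in> space M"
  shows "cesaro K n (indicator A) x \<le> indicator A x + (\<phi> (measure m A) + \<delta>)"
proof -
  define C where "C = \<phi> (measure m A) + \<delta>"
  have "C \<ge> 0" unfolding C_def using \<delta> by (simp add: phi_nonneg)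
  have PA: "measurable_between M (kop K (indicator A)) 0 C"
    using kop_between[OF measurable_between_indicator[OF A]] kop_indicator_le[OF A]
    by (auto simp: measurable_between_def C_def)
  have "kpow K k (indicator A) x \<le> (if k = 0 then indicator A x else 0) + C" for k
  proof (cases k)
    case 0
    then show ?thesis using \<open>C \<ge> 0\<close> by simp
  next
    case (Suc j)
    then show ?thesis using kpow_between[OF PA, of j] x by (simp add: kpow_Suc_right measurable_between_def)
  qed
  then have "(\<Sum>k<n. kpow K k (indicator A) x) \<le> (\<Sum>k<n. (if k = 0 then indicator A x else 0) + C)"
    by (intro sum_mono)
  also have "\<dots> = indicator A x + real n * C" using n by (simp add: sum.distrib)
  also have "\<dots> \<le> real n * (indicator A x + C)"
    using n by (simp add: algebra_simps indicator_def)
  finally show ?thesis using n unfolding cesaro_def C_def by (simp add: field_simps)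
qed

lemma integral_cesaro_indicator_le:
  assumes A: "A \<in> sets M" and n: "n \<ge> 1"
  shows "(\<integral>x. cesaro K n (indicator A) x \<partial>mR)
    \<le> measure mR A + (\<phi> (measure m A) + \<delta>) * measure mR (space M)"
proof -
  interpret finite_measure mR by (rule finite_measure_comp_resolvent)
  have [measurable]: "kpow K k (indicator A) \<in> borel_measurable M" for k
    using kpow_between[OF measurable_between_indicator[OF A]] by (simp add: measurable_between_def)
  have "measurable_between mR (cesaro K n (indicator A)) 0 (1 + (\<phi> (measure m A) + \<delta>))"
    unfolding measurable_between_def
  proof (intro conjI ballI)
    have "cesaro K n (indicator A) \<in> borel_measurable M"
      unfolding cesaro_def[abs_def] by measurable
    then show "cesaro K n (indicator A) \<in> borel_measurable mR"
      by (simp add: measurable_cong_sets[OF sets_comp_resolvent refl])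
    fix x assume "x \<in> space mR"
    then have x: "x \<in> space M" by simp
    show "0 \<le> cesaro K n (indicator A) x"
      unfolding cesaro_def using kpow_between[OF measurable_between_indicator[OF A]] x
      by (auto simp: measurable_between_def intro!: divide_nonneg_nonneg sum_nonneg)
    show "cesaro K n (indicator A) x \<le> 1 + (\<phi> (measure m A) + \<delta>)"
      using cesaro_indicator_le[OF A n x] by (cases "x \<in> A") auto
  qed
  then have int_cesaro: "integrable mR (cesaro K n (indicator A))"
    by (rule integrable_if_measurable_between)
  have int_A: "integrable mR (indicator A :: 'a \<Rightarrow> real)"
    by (rule integrable_if_measurable_between[of _ 0 1]) (use A in \<open>simp add: measurable_between_indicator\<close>)
  have "(\<integral>x. cesaro K n (indicator A) x \<partial>mR) \<le> (\<integral>x. indicator A x + (\<phi> (measure m A) + \<delta>) \<partial>mR)"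
    using cesaro_indicator_le[OF A n] int_cesaro int_A by (intro integral_mono) auto
  also have "\<dots> = measure mR A + (\<phi> (measure m A) + \<delta>) * measure mR (space M)"
    using A sets.sets_into_space[of A M] int_A by (simp add: Int_absorb2)
  finally show ?thesis .
qed

lemma ex_small_measure_phi_small:
  assumes "\<epsilon> > 0" "E \<ge> 0"
  shows "\<exists>\<eta>>0. \<forall>A\<in>sets M. measure mR A < \<eta> \<longrightarrow> measure mR A + \<phi> (measure m A) * E < \<epsilon>"
proof -
  define e where "e = \<epsilon> / (2 * (E + 1))"
  have "e > 0" using assms unfolding e_def by simp
  then obtain d where d: "d > 0" "\<And>s. s \<in> {0..} \<Longrightarrow> dist s 0 < d \<Longrightarrow> dist (\<phi> s) (\<phi> 0) < e"
    using \<phi>_cont unfolding continuous_on_iff by (metis atLeast_iff order_refl)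
  have eE: "e * E \<le> \<epsilon> / 2"
    using assms \<open>e > 0\<close> unfolding e_def by (simp add: field_simps)
  show ?thesis
  proof (intro exI[of _ "min (\<epsilon>/2) (d/2)"] conjI ballI impI)
    show "0 < min (\<epsilon>/2) (d/2)" using assms d by simp
    fix A assume A: "A \<in> sets M" and small: "measure mR A < min (\<epsilon>/2) (d/2)"
    then have "measure m A < d" using measure_le_comp_resolvent[OF A] by simp
    then have "\<phi> (measure m A) < e"
      using d(2)[of "measure m A"] phi_nonneg[OF measure_nonneg, of m A] \<phi>_0 by (auto simp: dist_real_def)
    then have "\<phi> (measure m A) * E \<le> e * E" using assms by (simp add: mult_right_mono)
    then show "measure mR A + \<phi> (measure m A) * E < \<epsilon>" using small eE by simp
  qed
qed

lemma mean_almost_invariant_comp_resolvent: "mean_almost_invariant M K mR"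
  unfolding mean_almost_invariant_def
proof (intro conjI finite_measure_comp_resolvent sets_comp_resolvent)
  define E where "E = measure mR (space M)"
  have "E \<ge> 0" unfolding E_def by simp
  define \<psi> where "\<psi> A = measure mR A + \<phi> (measure m A) * E" for A
  have cesaro: "\<forall>A\<in>sets M. \<forall>n\<ge>1. (\<integral>x. cesaro K n (indicator A) x \<partial>mR) \<le> \<psi> A + \<delta> * E"
    using integral_cesaro_indicator_le unfolding \<psi>_def E_def by (simp add: algebra_simps)
  have nonneg: "\<forall>A\<in>sets M. 0 \<le> \<psi> A"
    using \<open>E \<ge> 0\<close> by (simp add: \<psi>_def phi_nonneg)
  show "\<exists>\<delta>' \<psi> n1. 0 \<le> \<delta>' \<and> \<delta>' < 1 \<and> (\<forall>A\<in>sets M. 0 \<le> \<psi> A) \<and>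
        (\<forall>\<epsilon>>0. \<exists>\<eta>>0. \<forall>A\<in>sets M. measure mR A < \<eta> \<longrightarrow> \<psi> A < \<epsilon>) \<and>
        (\<forall>A\<in>sets M. \<forall>n\<ge>n1. (\<integral>x. cesaro K n (indicator A) x \<partial>mR) \<le> \<psi> A + \<delta>' * measure mR (space M))"
  proof (rule exI[of _ \<delta>], rule exI[of _ \<psi>], rule exI[of _ "1::nat"], intro conjI allI impI)
    show "0 \<le> \<delta>" "\<delta> < 1" by (fact \<delta>)+
    show "\<exists>\<eta>>0. \<forall>A\<in>sets M. measure mR A < \<eta> \<longrightarrow> \<psi> A < \<epsilon>" if "\<epsilon> > 0" for \<epsilon>
      unfolding \<psi>_def using ex_small_measure_phi_small[OF that \<open>E \<ge> 0\<close>] .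
  qed (use nonneg cesaro in \<open>simp_all add: E_def\<close>)
qed

lemma one_minus_delta_le_phi_full_set:
  assumes \<mu>: "invariant_prob M K \<mu>" and D: "D \<in> sets M" and full: "measure \<mu> D = 1"
  shows "1 - \<delta> \<le> \<phi> (measure m D)"
proof -
  have "prob_space \<mu>" and sets_\<mu>: "sets \<mu> = sets M" using \<mu> by (auto simp: invariant_prob_def)
  have "measurable_between M (kop K (indicator D)) 0 (\<phi> (measure m D) + \<delta>)"
    using kop_between[OF measurable_between_indicator[OF D]] kop_indicator_le[OF D]
    by (auto simp: measurable_between_def)
  then have "measurable_between \<mu> (kop K (indicator D)) 0 (\<phi> (measure m D) + \<delta>)"
    using measurable_between_cong_sets[OF sets_\<mu>] by simp
  then have "(\<integral>x. kop K (indicator D) x \<partial>\<mu>) \<le> \<phi> (measure m D) + \<delta>"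
    using prob_space.integral_between[OF \<open>prob_space \<mu>\<close>] by blast
  then show ?thesis using \<mu> D full by (simp add: invariant_prob_def)
qed

lemma one_minus_delta_le_phi_space:
  assumes "space M \<noteq> {}"
  shows "1 - \<delta> \<le> \<phi> (measure m (space M))"
proof -
  obtain x where x: "x \<in> space M" using assms by blast
  show ?thesis
    using kop_le[of "\<lambda>_. 1" x] x kop_const[OF x] finite_measure.emeasure_finite[OF finite_m]
    by (simp add: measurable_between_def space_m)
qed

lemma card_mutually_singular_invariant_le:
  assumes G: "finite G" and inv: "\<And>\<mu>. \<mu> \<in> G \<Longrightarrow> invariant_prob M K \<mu>"
    and sing: "\<And>\<mu> \<nu>. \<mu> \<in> G \<Longrightarrow> \<nu> \<in> G \<Longrightarrow> \<mu> \<noteq> \<nu> \<Longrightarrow> mutually_singular M \<mu> \<nu>"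
    and t: "\<And>s. 0 \<le> s \<Longrightarrow> 1 - \<delta> \<le> \<phi> s \<Longrightarrow> t \<le> s"
  shows "real (card G) * t \<le> measure m (space M)"
proof -
  interpret finite_measure m by (rule finite_m)
  obtain D where D: "\<And>\<mu>. \<mu> \<in> G \<Longrightarrow> D \<mu> \<in> sets M" "\<And>\<mu>. \<mu> \<in> G \<Longrightarrow> measure \<mu> (D \<mu>) = 1"
    and disj: "disjoint_family_on D G"
    using mutually_singular_disjoint_full_sets[OF G _ sing] inv by (auto simp: invariant_prob_def)
  have "real (card G) * t = (\<Sum>\<mu>\<in>G. t)" by simp
  also have "\<dots> \<le> (\<Sum>\<mu>\<in>G. measure m (D \<mu>))"
  proof (rule sum_mono)
    fix \<mu> assume "\<mu> \<in> G"
    then have "1 - \<delta> \<le> \<phi> (measure m (D \<mu>))"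
      using one_minus_delta_le_phi_full_set inv D by blast
    then show "t \<le> measure m (D \<mu>)" by (intro t) auto
  qed
  also have "\<dots> = measure m (\<Union>\<mu>\<in>G. D \<mu>)"
    using G D disj sets_m by (intro finite_measure_finite_Union[symmetric]) auto
  also have "\<dots> \<le> measure m (space M)"
    using bounded_measure by (simp add: space_m)
  finally show ?thesis .
qed

text \<open>Whichever of \<open>g\<close> and \<open>1 - g\<close> has \<open>m\<close>-integral at most \<open>m(E)/2\<close> controls the
  oscillation of \<open>P g\<close> from above.\<close>
lemma oscillation_kop_le:
  assumes mono: "mono_on {0..} \<phi>" and g: "measurable_between M g 0 1"
    and x: "x \<in> space M" and y: "y \<in> space M"
  shows "kop K g x - kop K g y \<le> \<phi> (measure m (space M) / 2) + \<delta>"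
proof -
  define I where "I = (\<integral>z. g z \<partial>m)"
  have "0 \<le> I" unfolding I_def
    using g by (intro integral_nonneg_AE AE_I2) (auto simp: measurable_between_def space_m)
  moreover have "I \<le> (\<integral>z. 1 \<partial>m)" unfolding I_def
    using g integrable_m[OF g] finite_measure.integrable_const[OF finite_m]
    by (intro integral_mono) (auto simp: measurable_between_def space_m)
  ultimately have I: "0 \<le> I" "I \<le> measure m (space M)" by (simp_all add: space_m)
  have P: "0 \<le> kop K g x \<and> kop K g x \<le> 1" "0 \<le> kop K g y \<and> kop K g y \<le> 1"
    using kop_between[OF g] x y by (auto simp: measurable_between_def)
  show ?thesis
  proof (cases "I \<le> measure m (space M) / 2")
    case True
    have "kop K g x \<le> \<phi> I + \<delta>" unfolding I_def by (rule kop_le[OF g x])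
    also have "\<phi> I \<le> \<phi> (measure m (space M) / 2)" using mono_onD[OF mono] I True by simp
    finally show ?thesis using P by simp
  next
    case False
    have h: "measurable_between M (\<lambda>z. -1 * g z + 1) 0 1"
      using g by (auto simp: measurable_between_def)
    have "(\<integral>z. -1 * g z + 1 \<partial>m) = measure m (space M) - I"
      unfolding I_def
      by (subst Bochner_Integration.integral_add)
         (use integrable_m[OF g] finite_measure.integrable_const[OF finite_m] in \<open>auto simp: space_m\<close>)
    then have "kop K (\<lambda>z. -1 * g z + 1) y \<le> \<phi> (measure m (space M) - I) + \<delta>"
      using kop_le[OF h y] by simp
    also have "\<phi> (measure m (space M) - I) \<le> \<phi> (measure m (space M) / 2)"
      using mono_onD[OF mono] I False by simp
    finally show ?thesis using kop_affine[OF g y, where c="-1" and d=1] P by simp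
  qed
qed

lemma ex1_invariant_prob_if_phi_half_small:
  assumes "mono_on {0..} \<phi>" and "space M \<noteq> {}" and small: "\<phi> (measure m (space M) / 2) < 1 - \<delta>"
  shows "\<exists>!\<mu>. invariant_prob M K \<mu>"
proof -
  have "doeblin_operator M K (\<phi> (measure m (space M) / 2) + \<delta>)"
  proof (intro doeblin_operator.intro markov_operator_axioms doeblin_operator_axioms.intro)
    show "0 \<le> \<phi> (measure m (space M) / 2) + \<delta>" using \<delta> by (simp add: phi_nonneg)
    show "\<phi> (measure m (space M) / 2) + \<delta> < 1" using small by simp
    show "space M \<noteq> {}" by fact
    show "kop K g x - kop K g y \<le> \<phi> (measure m (space M) / 2) + \<delta>"
      if "measurable_between M g 0 1" "x \<in> space M" "y \<in> space M" for g x y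
      using oscillation_kop_le[OF \<open>mono_on {0..} \<phi>\<close>] that by blast
  qed
  then show ?thesis by (rule doeblin_operator.ex1_invariant_prob)
qed

end

theorem corollary3p12:
  fixes S :: "'a::polish_space set"
    and K :: "'a \<Rightarrow> 'a measure"
    and m :: "'a measure"
    and \<phi> :: "real \<Rightarrow> real"
    and \<delta> :: real
  defines "M \<equiv> restrict_space borel S"
  assumes S_ne: "S \<noteq> {}"
    and S_um: "universally_measurable S"
    and K: "markov_kernel M K"
    and m_fin: "finite_measure m" and m_sets: "sets m = sets M"
    and \<phi>_cont: "continuous_on {0..} \<phi>"
    and \<phi>_range: "\<phi> ` {0..} \<subseteq> {0..}"
    and \<phi>_0: "\<phi> 0 = 0"
    and \<phi>_inj: "inj_on \<phi> {0..}"
    and \<phi>_inv_mono: "mono_on (\<phi> ` {0..}) (the_inv_into {0..} \<phi>)"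
    and \<delta>: "0 \<le> \<delta>" "\<delta> < 1"
    and bound: "\<And>f x. f \<in> borel_measurable M \<Longrightarrow> (\<forall>y\<in>space M. 0 \<le> f y \<and> f y \<le> 1)
                  \<Longrightarrow> x \<in> space M \<Longrightarrow> kop K f x \<le> \<phi> (\<integral>y. f y \<partial>m) + \<delta>"
  shows "mean_almost_invariant M K (comp_resolvent M m K)
       \<and> (\<forall>F. (\<forall>\<mu>\<in>F. invariant_prob M K \<mu>)
              \<and> (\<forall>\<mu>\<in>F. \<forall>\<nu>\<in>F. \<mu> \<noteq> \<nu> \<longrightarrow> mutually_singular M \<mu> \<nu>)
              \<longrightarrow> finite F \<and>
                  real (card F) \<le> measure m (space M) / the_inv_into {0..} \<phi> (1 - \<delta>))
       \<and> (\<phi> (measure m (space M) / 2) < 1 - \<delta> \<longrightarrow> (\<exists>!\<mu>. invariant_prob M K \<mu>))"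
proof -
  interpret phi_bounded_kernel M K m \<phi> \<delta>
    using K m_fin m_sets \<phi>_cont \<phi>_range \<phi>_0 \<delta> bound
    by (intro phi_bounded_kernel.intro markov_operator_measure.intro markov_operator.intro
        markov_operator_measure_axioms.intro phi_bounded_kernel_axioms.intro)
  have nonempty: "space M \<noteq> {}" using S_ne by (simp add: M_def space_restrict_space)
  have mono: "strict_mono_on {0..} \<phi>" using \<phi>_inj \<phi>_inv_mono by (rule strict_mono_on_if_inverse_mono)
  define t where "t = the_inv_into {0..} \<phi> (1 - \<delta>)"
  have t: "0 < t" "\<And>s. 0 \<le> s \<Longrightarrow> 1 - \<delta> \<le> \<phi> s \<Longrightarrow> t \<le> s"
    using the_inv_into_least[OF mono \<phi>_cont \<phi>_0 _ one_minus_delta_le_phi_space[OF nonempty]] \<delta>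
    unfolding t_def by auto
  show ?thesis
  proof (intro conjI allI impI mean_almost_invariant_comp_resolvent)
    fix F :: "'a measure set"
    assume F: "(\<forall>\<mu>\<in>F. invariant_prob M K \<mu>) \<and> (\<forall>\<mu>\<in>F. \<forall>\<nu>\<in>F. \<mu> \<noteq> \<nu> \<longrightarrow> mutually_singular M \<mu> \<nu>)"
    have "real (card G) * t \<le> measure m (space M)" if "G \<subseteq> F" "finite G" for G
      using F that by (intro card_mutually_singular_invariant_le t(2)) blast+
    then have "finite F \<and> real (card F) \<le> measure m (space M) / t"
      by (rule finite_card_le_if_finite_subsets[OF t(1)])
    then show "finite F" "real (card F) \<le> measure m (space M) / the_inv_into {0..} \<phi> (1 - \<delta>)"
      unfolding t_def by blast+
  next
    assume "\<phi> (measure m (space M) / 2) < 1 - \<delta>"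
    then show "\<exists>!\<mu>. invariant_prob M K \<mu>"
      by (rule ex1_invariant_prob_if_phi_half_small[OF strict_mono_on_imp_mono_on[OF mono] nonempty])
  qed
qed

end
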